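(* Let $L,T$ be positive integers, $p_1<p_2<\dots<p_L$ distinct primes, $N_i=p_i+2L+2T-2$ for $i\in[L]$, $q_0$ a prime power with $q_0\ge N_L$, and $q=q_0^{p_1p_2\cdots p_L}$. Let $A=[A_1\ \cdots\ A_L]\in\mathbb{F}_q^{a\times b}$ and $B$ with $B^{\intercal}=[B_1^{\intercal}\ \cdots\ B_L^{\intercal}]\in\mathbb{F}_q^{c\times b}$, where $A_i\in\mathbb{F}_q^{a\times b/L}$, $B_i\in\mathbb{F}_q^{b/L\times c}$. Then, in the FTP code described in the context, for each $i\in[L]$ the value $h(\alpha_i)=A_iB_i$ can be computed from the responses of the $N_i$ servers $1,\dots,N_i$ for index $i$, namely from $\{\operatorname{tr}_{\mathbb{F}_q/F_i}(v_jk_i(\alpha_j)h(\alpha_j)) : j\in\{L+1,\dots,L+N_i\}\}$.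
   Context: For a finite extension $\mathbb{E}/\mathbb{F}$ of degree $s$, $\operatorname{tr}_{\mathbb{E}/\mathbb{F}}(x)=x+x^{|\mathbb{F}|}+\cdots+x^{|\mathbb{F}|^{s-1}}$, applied entrywise to matrices. FTP code: let $n=N_L+L$. For $i\in[L]$ pick $\alpha_i\in\mathbb{F}_q$ with $[\mathbb{F}_{q_0}(\alpha_i):\mathbb{F}_{q_0}]=p_i$, and let $F_i=\mathbb{F}_{q_0}(\alpha_j: j\in[L],j\ne i)$. Pick distinct $\alpha_{L+1},\dots,\alpha_n\in\mathbb{F}_{q_0}$. Let $R_1,\dots,R_T\in\mathbb{F}_q^{a\times b/L}$, $S_1,\dots,S_T\in\mathbb{F}_q^{b/L\times c}$ be random matrices. Let $f,g$ be polynomials with matrix coefficients over $\mathbb{F}_q$ of degree at most $L+T-1$ with $f(\alpha_i)=A_i,g(\alpha_i)=B_i$ ($i\in[L]$), $f(\alpha_{L+j})=R_j$, $g(\alpha_{L+j})=S_j$ ($j\in[T]$), and $h=fg$. Server $j\in[N_L]$ holds $f(\alpha_{L+j}),g(\alpha_{L+j})$ and hence $h(\alpha_{L+j})$. Define $v_j=\prod_{i\in[n],i\ne j}(\alpha_j-\alpha_i)^{-1}$, $U_i=\{L+1,\dots,L+N_i\}$, and $k_i(x)=\prod_{j\in[n]\setminus(U_i\cup\{i\})}(x-\alpha_j)$. For each $i\in[L]$, server $j\in[N_i]$ sends $\operatorname{tr}_{\mathbb{F}_q/F_i}(v_{L+j}k_i(\alpha_{L+j})h(\alpha_{L+j}))$.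 *)

theory Defs
  imports "Jordan_Normal_Form.Matrix" "HOL-Computational_Algebra.Polynomial"
    "HOL-Computational_Algebra.Primes"
begin

definition is_subfield :: "'a::field set \<Rightarrow> bool" where
  "is_subfield F \<longleftrightarrow> 0 \<in> F \<and> 1 \<in> F \<and>
     (\<forall>x\<in>F. \<forall>y\<in>F. x + y \<in> F \<and> x * y \<in> F) \<and>
     (\<forall>x\<in>F. - x \<in> F \<and> inverse x \<in> F)"

definition field_gen :: "'a::field set \<Rightarrow> 'a set \<Rightarrow> 'a set" where
  "field_gen K S = \<Inter>{F. is_subfield F \<and> K \<subseteq> F \<and> S \<subseteq> F}"

definition ext_deg :: "'a::field set \<Rightarrow> 'a set \<Rightarrow> nat" where
  "ext_deg K E = (LEAST d. \<exists>bs. length bs = d \<and> set bs \<subseteq> E \<and>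
      (\<forall>e\<in>E. \<exists>cs. length cs = d \<and> set cs \<subseteq> K \<and> e = (\<Sum>l<d. cs ! l * bs ! l)))"

definition tr :: "'a::field set \<Rightarrow> 'a set \<Rightarrow> 'a \<Rightarrow> 'a" where
  "tr E K x = (\<Sum>k < ext_deg K E. x ^ (card K ^ k))"

text \<open>Evaluation of a polynomial with matrix coefficients, represented as a matrix of polynomials.\<close>
definition eval_pm :: "'a::comm_ring_1 \<Rightarrow> 'a poly mat \<Rightarrow> 'a mat" where
  "eval_pm x M = map_mat (\<lambda>e. poly e x) M"

text \<open>Column block A_i of A = [A_1 ... A_L] and row block B_i of B (B^T = [B_1^T ... B_L^T]); i is 1-based.\<close>
definition col_block :: "'a mat \<Rightarrow> nat \<Rightarrow> nat \<Rightarrow> 'a mat" where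
  "col_block A L i = mat (dim_row A) (dim_col A div L)
     (\<lambda>(r, s). A $$ (r, (i - 1) * (dim_col A div L) + s))"

definition row_block :: "'a mat \<Rightarrow> nat \<Rightarrow> nat \<Rightarrow> 'a mat" where
  "row_block B L i = mat (dim_row B div L) (dim_col B)
     (\<lambda>(r, s). B $$ ((i - 1) * (dim_row B div L) + r, s))"

definition ftp_F :: "'a::field set \<Rightarrow> (nat \<Rightarrow> 'a) \<Rightarrow> nat \<Rightarrow> nat \<Rightarrow> 'a set" where
  "ftp_F F0 \<alpha> L i = field_gen F0 (\<alpha> ` ({1..L} - {i}))"

definition ftp_v :: "(nat \<Rightarrow> 'a::field) \<Rightarrow> nat \<Rightarrow> nat \<Rightarrow> 'a" where
  "ftp_v \<alpha> n j = (\<Prod>i \<in> {1..n} - {j}. inverse (\<alpha> j - \<alpha> i))"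

definition ftp_k :: "(nat \<Rightarrow> 'a::field) \<Rightarrow> nat \<Rightarrow> nat \<Rightarrow> nat \<Rightarrow> nat \<Rightarrow> 'a \<Rightarrow> 'a" where
  "ftp_k \<alpha> L n Ni i x = (\<Prod>j \<in> {1..n} - ({L+1..L+Ni} \<union> {i}). (x - \<alpha> j))"

end

theory Submission
  imports Defs "HOL-Number_Theory.Residues"
begin

text \<open>
  Since the decoder may be any function of the responses, it suffices that the responses determine
  \<open>h(\<alpha>\<^sub>i)\<close>, i.e. that an entry \<open>H\<close> of \<open>h\<close> (of degree at most \<open>2(L+T-1)\<close>) whose responses all
  vanish satisfies \<open>H(\<alpha>\<^sub>i) = 0\<close>. For \<open>m < p\<^sub>i\<close> the polynomial \<open>x^m k\<^sub>i(x) H(x)\<close> has degree at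
  most \<open>n - 2\<close>, so the Lagrange weights \<open>v\<^sub>j\<close> annihilate its values at \<open>\<alpha>\<^sub>1, \<dots>, \<alpha>\<^sub>n\<close>. Only
  \<open>j = i\<close> and \<open>j \<in> U\<^sub>i\<close> contribute, because \<open>k\<^sub>i\<close> vanishes elsewhere; as \<open>\<alpha>\<^sub>j \<in> F0 \<subseteq> F\<^sub>i\<close> for
  \<open>j \<in> U\<^sub>i\<close>, the \<open>F\<^sub>i\<close>-linear trace turns this into \<open>tr(\<alpha>\<^sub>i^m Y) = 0\<close> with
  \<open>Y = v\<^sub>i k\<^sub>i(\<alpha>\<^sub>i) H(\<alpha>\<^sub>i)\<close>. The degrees \<open>p\<^sub>l\<close> are distinct primes dividing \<open>[F\<^sub>q : F0]\<close>, so by the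
  tower law \<open>\<alpha>\<^sub>1, \<dots>, \<alpha>\<^sub>L\<close> generate \<open>F\<^sub>q\<close> over \<open>F0\<close>. Hence \<open>F\<^sub>i(\<alpha>\<^sub>i) = F\<^sub>q\<close>, and since \<open>\<alpha>\<^sub>i\<close>
  satisfies a relation of degree at most \<open>p\<^sub>i\<close> over \<open>F0\<close>, the powers \<open>1, \<alpha>\<^sub>i, \<dots>, \<alpha>\<^sub>i^(p\<^sub>i-1)\<close>
  span \<open>F\<^sub>q\<close> over \<open>F\<^sub>i\<close>. So \<open>tr(zY) = 0\<close> for every \<open>z\<close>, and as the trace is not identically zero,
  \<open>Y = 0\<close>; finally \<open>v\<^sub>i k\<^sub>i(\<alpha>\<^sub>i) \<noteq> 0\<close> because the \<open>\<alpha>\<^sub>j\<close> are distinct.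
\<close>

section \<open>Subfields and extension degrees\<close>

lemma subfield_zero_closed: "is_subfield F \<Longrightarrow> 0 \<in> F"
  and subfield_one_closed: "is_subfield F \<Longrightarrow> 1 \<in> F"
  and subfield_add_closed: "is_subfield F \<Longrightarrow> x \<in> F \<Longrightarrow> y \<in> F \<Longrightarrow> x + y \<in> F"
  and subfield_mult_closed: "is_subfield F \<Longrightarrow> x \<in> F \<Longrightarrow> y \<in> F \<Longrightarrow> x * y \<in> F"
  and subfield_uminus_closed: "is_subfield F \<Longrightarrow> x \<in> F \<Longrightarrow> - x \<in> F"
  and subfield_inverse_closed: "is_subfield F \<Longrightarrow> x \<in> F \<Longrightarrow> inverse x \<in> F"
  by (simp_all add: is_subfield_def)

lemma subfield_diff_closed: "is_subfield F \<Longrightarrow> x \<in> F \<Longrightarrow> y \<in> F \<Longrightarrow> x - y \<in> F"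
  using subfield_add_closed[of F x "- y"] subfield_uminus_closed[of F y] by simp

lemma subfield_divide_closed: "is_subfield F \<Longrightarrow> x \<in> F \<Longrightarrow> y \<in> F \<Longrightarrow> x / y \<in> F"
  using subfield_mult_closed[of F x "inverse y"] subfield_inverse_closed[of F y]
  by (simp add: divide_inverse)

lemma subfield_power_closed: "is_subfield F \<Longrightarrow> x \<in> F \<Longrightarrow> x ^ n \<in> F"
  by (induction n) (auto intro: subfield_one_closed subfield_mult_closed)

lemma subfield_sum_closed: "is_subfield F \<Longrightarrow> (\<And>a. a \<in> A \<Longrightarrow> f a \<in> F) \<Longrightarrow> sum f A \<in> F"
  by (induction A rule: infinite_finite_induct) (auto intro: subfield_zero_closed subfield_add_closed)

lemma is_subfield_UNIV: "is_subfield UNIV"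
  by (simp add: is_subfield_def)

lemma finite_subring_is_subfield:
  fixes S :: "'a::field set"
  assumes "finite S" "0 \<in> S" "1 \<in> S" and "\<And>x. x \<in> S \<Longrightarrow> - x \<in> S"
    and "\<And>x y. x \<in> S \<Longrightarrow> y \<in> S \<Longrightarrow> x + y \<in> S" "\<And>x y. x \<in> S \<Longrightarrow> y \<in> S \<Longrightarrow> x * y \<in> S"
  shows "is_subfield S"
  unfolding is_subfield_def
proof (intro conjI ballI)
  fix x assume x: "x \<in> S"
  show "inverse x \<in> S"
  proof (cases "x = 0")
    case False
    have "(\<lambda>y. x * y) ` S = S"
      using False x assms by (intro endo_inj_surj) (auto simp: inj_on_def)
    then obtain y where "y \<in> S" "x * y = 1" using \<open>1 \<in> S\<close> by (metis imageE)
    then show ?thesis using False by (simp add: inverse_unique)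
  qed (use assms in simp)
qed (use assms in auto)

lemma is_subfield_field_gen: "is_subfield (field_gen K S)"
  unfolding field_gen_def is_subfield_def by blast

lemma field_gen_base_subset: "K \<subseteq> field_gen K S"
  and field_gen_gens_subset: "S \<subseteq> field_gen K S"
  unfolding field_gen_def by blast+

lemma field_gen_least: "is_subfield F \<Longrightarrow> K \<subseteq> F \<Longrightarrow> S \<subseteq> F \<Longrightarrow> field_gen K S \<subseteq> F"
  unfolding field_gen_def by blast

lemma subfield_card_ge_2: "is_subfield F \<Longrightarrow> finite F \<Longrightarrow> 2 \<le> card F"
  using card_mono[of F "{0, 1}"] subfield_zero_closed[of F] subfield_one_closed[of F] by auto

definition spans :: "'a::field set \<Rightarrow> 'a list \<Rightarrow> 'a set \<Rightarrow> bool" where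
  "spans M bs K \<longleftrightarrow> (\<forall>e\<in>K. \<exists>cs. length cs = length bs \<and> set cs \<subseteq> M \<and>
      e = (\<Sum>l<length bs. cs ! l * bs ! l))"

lemma ext_deg_spans: "ext_deg M K = (LEAST d. \<exists>bs. length bs = d \<and> set bs \<subseteq> K \<and> spans M bs K)"
  unfolding ext_deg_def spans_def by (rule arg_cong[where f = Least], rule ext) metis

lemma finite_imp_spanning_list:
  fixes M :: "'a::field set"
  assumes M: "is_subfield M" and "finite K"
  shows "\<exists>bs. set bs \<subseteq> K \<and> spans M bs K"
proof -
  obtain bs where bs: "set bs = K" "distinct bs" using finite_distinct_list[OF \<open>finite K\<close>] by blast
  have "spans M bs K"
    unfolding spans_def
  proof
    fix e assume "e \<in> K"
    then obtain k where k: "k < length bs" "bs ! k = e" using bs by (metis in_set_conv_nth)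
    define cs where "cs = map (\<lambda>l. if l = k then 1 else 0 :: 'a) [0..<length bs]"
    have "(\<Sum>l<length bs. cs ! l * bs ! l) = (\<Sum>l<length bs. if l = k then bs ! l else 0)"
      by (rule sum.cong) (auto simp: cs_def)
    then show "\<exists>cs. length cs = length bs \<and> set cs \<subseteq> M \<and> e = (\<Sum>l<length bs. cs ! l * bs ! l)"
      using k subfield_zero_closed[OF M] subfield_one_closed[OF M]
      by (intro exI[of _ cs]) (auto simp: cs_def)
  qed
  then show ?thesis using bs by auto
qed

definition skip :: "nat \<Rightarrow> nat \<Rightarrow> nat" where
  "skip k l = (if l < k then l else Suc l)"

lemma sum_lessThan_skip:
  assumes "k < d"
  shows "(\<Sum>l<d. f l) = f k + (\<Sum>l<d - 1. f (skip k l))"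
proof -
  have "{..<d} - {k} \<subseteq> skip k ` {..<d - 1}"
  proof
    fix l assume l: "l \<in> {..<d} - {k}"
    show "l \<in> skip k ` {..<d - 1}"
    proof (cases "l < k")
      case True
      then show ?thesis using l assms by (intro image_eqI[of _ _ l]) (auto simp: skip_def)
    next
      case False
      then show ?thesis using l assms by (intro image_eqI[of _ _ "l - 1"]) (auto simp: skip_def)
    qed
  qed
  then have "{..<d} - {k} = skip k ` {..<d - 1}"
    using assms by (auto simp: skip_def)
  moreover have "inj_on (skip k) {..<d - 1}"
    by (auto simp: inj_on_def skip_def split: if_splits)
  ultimately show ?thesis
    using assms by (simp add: sum.remove sum.reindex)
qed

lemma spans_remove_dependent:
  assumes M: "is_subfield M" and sp: "spans M bs K" and len: "length ds = length bs"
    and ds: "set ds \<subseteq> M" and rel: "(\<Sum>l<length bs. ds ! l * bs ! l) = 0"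
    and k: "k < length bs" "ds ! k \<noteq> 0"
  shows "spans M (map (\<lambda>l. bs ! skip k l) [0..<length bs - 1]) K"
  unfolding spans_def
proof
  let ?d = "length bs"
  fix e assume "e \<in> K"
  then obtain cs where cs: "length cs = ?d" "set cs \<subseteq> M" "e = (\<Sum>l<?d. cs ! l * bs ! l)"
    using sp unfolding spans_def by blast
  define cs' where "cs' = map (\<lambda>l. cs ! skip k l - cs ! k * ds ! skip k l / ds ! k) [0..<?d - 1]"
  have skip_less: "l < ?d - 1 \<Longrightarrow> skip k l < ?d" for l using k by (auto simp: skip_def)
  have "set cs' \<subseteq> M"
    using cs len ds k skip_less nth_mem
    by (auto simp: cs'_def intro!: subfield_diff_closed[OF M] subfield_divide_closed[OF M]
        subfield_mult_closed[OF M])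
  moreover have "e = (\<Sum>l<?d - 1. cs' ! l * bs ! skip k l)"
  proof -
    have "bs ! k = - (\<Sum>l<?d - 1. ds ! skip k l * bs ! skip k l) / ds ! k"
      using rel sum_lessThan_skip[OF k(1), of "\<lambda>l. ds ! l * bs ! l"] k(2)
      by (simp add: field_simps eq_neg_iff_add_eq_0)
    then have "e = (\<Sum>l<?d - 1. cs ! skip k l * bs ! skip k l)
        - cs ! k / ds ! k * (\<Sum>l<?d - 1. ds ! skip k l * bs ! skip k l)"
      using cs(3) sum_lessThan_skip[OF k(1), of "\<lambda>l. cs ! l * bs ! l"] by simp
    also have "\<dots> = (\<Sum>l<?d - 1. cs' ! l * bs ! skip k l)"
      by (simp add: cs'_def sum_distrib_left flip: sum_subtractf) (simp add: algebra_simps)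
    finally show ?thesis .
  qed
  ultimately show "\<exists>cs. length cs = length (map (\<lambda>l. bs ! skip k l) [0..<?d - 1]) \<and> set cs \<subseteq> M \<and>
      e = (\<Sum>l<length (map (\<lambda>l. bs ! skip k l) [0..<?d - 1]).
             cs ! l * map (\<lambda>l. bs ! skip k l) [0..<?d - 1] ! l)"
    by (intro exI[of _ cs']) (auto simp: cs'_def)
qed

text \<open>A spanning list of minimal length is a basis: a nontrivial relation would let one drop
  a vector.\<close>

lemma minimal_spanning_list_inj:
  assumes M: "is_subfield M" and bs: "set bs \<subseteq> K" "spans M bs K"
    and minimal: "\<And>bs'. set bs' \<subseteq> K \<Longrightarrow> spans M bs' K \<Longrightarrow> length bs \<le> length bs'"
  shows "inj_on (\<lambda>cs. \<Sum>l<length bs. cs ! l * bs ! l) {cs. set cs \<subseteq> M \<and> length cs = length bs}"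
proof (rule inj_onI)
  fix cs cs' assume "cs \<in> {cs. set cs \<subseteq> M \<and> length cs = length bs}"
    "cs' \<in> {cs. set cs \<subseteq> M \<and> length cs = length bs}"
    and eq: "(\<Sum>l<length bs. cs ! l * bs ! l) = (\<Sum>l<length bs. cs' ! l * bs ! l)"
  then have len: "length cs = length bs" "length cs' = length bs" and sub: "set cs \<subseteq> M" "set cs' \<subseteq> M"
    by auto
  define ds where "ds = map (\<lambda>l. cs ! l - cs' ! l) [0..<length bs]"
  have len_ds: "length ds = length bs"
    by (simp add: ds_def)
  have ds_M: "set ds \<subseteq> M"
  proof
    fix x assume "x \<in> set ds"
    then obtain l where l: "l < length bs" "x = cs ! l - cs' ! l" by (auto simp: ds_def)
    then have "cs ! l \<in> set cs" "cs' ! l \<in> set cs'" using len by simp_all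
    then show "x \<in> M" using sub l(2) by (auto intro!: subfield_diff_closed[OF M])
  qed
  have "(\<Sum>l<length bs. ds ! l * bs ! l)
      = (\<Sum>l<length bs. cs ! l * bs ! l) - (\<Sum>l<length bs. cs' ! l * bs ! l)"
    unfolding sum_subtractf[symmetric] by (rule sum.cong) (simp_all add: ds_def algebra_simps)
  then have rel: "(\<Sum>l<length bs. ds ! l * bs ! l) = 0"
    using eq by simp
  have "ds ! k = 0" if k: "k < length bs" for k
  proof (rule ccontr)
    assume "ds ! k \<noteq> 0"
    then have "spans M (map (\<lambda>l. bs ! skip k l) [0..<length bs - 1]) K"
      by (rule spans_remove_dependent[OF M bs(2) len_ds ds_M rel k])
    moreover have "set (map (\<lambda>l. bs ! skip k l) [0..<length bs - 1]) \<subseteq> K"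
      using bs(1) k by (auto simp: skip_def intro!: nth_mem[THEN subsetD[OF bs(1)]])
    ultimately show False
      using minimal k by fastforce
  qed
  then show "cs = cs'"
    using len by (intro nth_equalityI) (auto simp: ds_def)
qed

lemma card_subfield:
  fixes M K :: "'a::{field,finite} set"
  assumes M: "is_subfield M" and K: "is_subfield K" and MK: "M \<subseteq> K"
  shows "card K = card M ^ ext_deg M K"
proof -
  have ex: "\<exists>d bs. length bs = d \<and> set bs \<subseteq> K \<and> spans M bs K"
    using finite_imp_spanning_list[OF M, of K] by auto
  obtain bs where bs: "length bs = ext_deg M K" "set bs \<subseteq> K" "spans M bs K"
    using LeastI_ex[OF ex] unfolding ext_deg_spans by blast
  have minimal: "length bs \<le> length bs'" if "set bs' \<subseteq> K" "spans M bs' K" for bs'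
    using Least_le[of "\<lambda>d. \<exists>bs. length bs = d \<and> set bs \<subseteq> K \<and> spans M bs K" "length bs'"] that
    unfolding bs(1) ext_deg_spans by blast
  define C where "C = {cs. set cs \<subseteq> M \<and> length cs = length bs}"
  define \<phi> where "\<phi> = (\<lambda>cs. \<Sum>l<length bs. cs ! l * bs ! l)"
  have "\<phi> ` C = K"
  proof
    show "\<phi> ` C \<subseteq> K"
    proof (rule image_subsetI)
      fix cs assume "cs \<in> C"
      then have "set cs \<subseteq> K" "length cs = length bs" using MK by (auto simp: C_def)
      then show "\<phi> cs \<in> K"
        using bs(2) unfolding \<phi>_def
        by (intro subfield_sum_closed[OF K] subfield_mult_closed[OF K]) (auto intro!: set_mp[OF _ nth_mem])
    qed
    show "K \<subseteq> \<phi> ` C"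
      using bs(3) unfolding spans_def \<phi>_def C_def by fastforce
  qed
  moreover have "inj_on \<phi> C"
    unfolding \<phi>_def C_def by (rule minimal_spanning_list_inj[OF M bs(2,3) minimal])
  ultimately have "card K = card C"
    using card_image by blast
  also have "\<dots> = card M ^ ext_deg M K"
    unfolding C_def bs(1) by (rule card_lists_length_eq) simp
  finally show ?thesis .
qed

lemma ext_deg_pos:
  fixes M K :: "'a::{field,finite} set"
  assumes "is_subfield M" "is_subfield K" "M \<subseteq> K"
  shows "0 < ext_deg M K"
  using card_subfield[OF assms] subfield_card_ge_2[OF assms(2)] by (cases "ext_deg M K") auto

lemma ext_deg_tower:
  fixes M G K :: "'a::{field,finite} set"
  assumes M: "is_subfield M" and G: "is_subfield G" and K: "is_subfield K"
    and "M \<subseteq> G" "G \<subseteq> K"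
  shows "ext_deg M K = ext_deg M G * ext_deg G K"
proof -
  have "card M ^ ext_deg M K = card K"
    using card_subfield[OF M K] assms(4,5) by simp
  also have "\<dots> = card G ^ ext_deg G K"
    by (rule card_subfield[OF G K assms(5)])
  also have "card G = card M ^ ext_deg M G"
    by (rule card_subfield[OF M G assms(4)])
  finally have "card M ^ ext_deg M K = card M ^ (ext_deg M G * ext_deg G K)"
    by (simp add: power_mult)
  then show ?thesis
    using subfield_card_ge_2[OF M] by simp
qed

lemma ext_deg_field_gen_mem:
  fixes F :: "'a::{field,finite} set"
  assumes F: "is_subfield F" and x: "x \<in> F"
  shows "ext_deg F (field_gen F {x}) = 1"
proof -
  have "field_gen F {x} = F"
    using field_gen_least[OF F, of F "{x}"] field_gen_base_subset[of F "{x}"] x by auto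
  then have "card F ^ ext_deg F (field_gen F {x}) = card F ^ 1"
    using card_subfield[OF F F] by simp
  moreover have "1 < card F"
    using subfield_card_ge_2[OF F] by simp
  ultimately show ?thesis
    by (simp only: power_inject_exp)
qed

section \<open>Frobenius and the trace\<close>

lemma subfield_power_card:
  fixes F :: "'a::field set"
  assumes F: "is_subfield F" "finite F" and c: "c \<in> F"
  shows "c ^ card F = c"
proof (cases "c = 0")
  case True
  then show ?thesis
    using F subfield_zero_closed[OF F(1)] by (auto simp: card_gt_0_iff)
next
  case False
  have "(\<Prod>y\<in>F - {0}. c * y) = (\<Prod>y\<in>F - {0}. y)"
    by (rule prod.reindex_bij_witness[of _ "\<lambda>y. y / c" "\<lambda>y. c * y"])
      (use False c in \<open>auto intro: subfield_mult_closed[OF F(1)] subfield_divide_closed[OF F(1)]\<close>)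
  then have "c ^ card (F - {0}) = 1"
    using F(2) by (simp add: prod.distrib)
  moreover have "card F = Suc (card (F - {0}))"
    by (rule card_Suc_Diff1[OF F(2) subfield_zero_closed[OF F(1)], symmetric])
  ultimately show ?thesis by simp
qed

lemma subfield_power_card_power:
  fixes F :: "'a::field set"
  assumes "is_subfield F" "finite F" and "c \<in> F"
  shows "c ^ (card F ^ k) = c"
  by (induction k) (simp_all add: power_mult subfield_power_card[OF assms] flip: power_Suc2)

lemma subfield_card_CHAR_power:
  fixes F :: "'a::{field,finite} set"
  assumes F: "is_subfield F" and r: "prime r" and card_UNIV: "card (UNIV :: 'a set) = r ^ N"
  shows "\<exists>j. card F = CHAR('a) ^ j"
proof -
  have "prime CHAR('a)"
    by (simp add: finite_imp_CHAR_pos prime_CHAR_semidom)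
  moreover have "CHAR('a) dvd r ^ N"
    using CHAR_dvd_CARD[where 'a = 'a] card_UNIV by simp
  ultimately have "CHAR('a) = r"
    using r by (metis prime_dvd_power primes_dvd_imp_eq)
  moreover have "card F dvd r ^ N"
    using card_subfield[OF F is_subfield_UNIV] ext_deg_pos[OF F is_subfield_UNIV] card_UNIV
    by (metis dvd_power subset_UNIV)
  ultimately show ?thesis
    using divides_primepow_nat[OF r] by auto
qed

context
  fixes F :: "'a::{field,finite} set" and j :: nat
  assumes subfield: "is_subfield F" and card_CHAR_power: "card F = CHAR('a) ^ j"
begin

lemma trace_add: "tr UNIV F (x + y) = tr UNIV F x + tr UNIV F y"
proof -
  have "prime CHAR('a)"
    by (simp add: finite_imp_CHAR_pos prime_CHAR_semidom)
  then have "(x + y) ^ (card F ^ k) = x ^ (card F ^ k) + y ^ (card F ^ k)" for k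
    by (rule freshmans_dream'[of _ "j * k"]) (simp add: card_CHAR_power power_mult)
  then show ?thesis
    unfolding tr_def by (simp add: sum.distrib)
qed

lemma trace_zero: "tr UNIV F 0 = 0"
  using trace_add[of 0 0] by (metis add.right_neutral add_left_cancel)

lemma trace_uminus: "tr UNIV F (- x) = - tr UNIV F x"
  using trace_add[of x "- x"] trace_zero by (simp add: eq_neg_iff_add_eq_0 add.commute)

lemma trace_diff: "tr UNIV F (x - y) = tr UNIV F x - tr UNIV F y"
  using trace_add[of x "- y"] trace_uminus[of y] by simp

lemma trace_sum: "tr UNIV F (\<Sum>a\<in>A. f a) = (\<Sum>a\<in>A. tr UNIV F (f a))"
  by (induction A rule: infinite_finite_induct) (simp_all add: trace_zero trace_add)

lemma trace_scale: "c \<in> F \<Longrightarrow> tr UNIV F (c * x) = c * tr UNIV F x"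
  unfolding tr_def
  by (simp add: power_mult_distrib subfield_power_card_power[OF subfield] sum_distrib_left)

text \<open>The trace is a polynomial of degree \<open>|F|^(s-1)\<close>, fewer than the \<open>|F|^s\<close> field elements.\<close>

lemma trace_nonzero: "\<exists>y. tr UNIV F y \<noteq> 0"
proof (rule ccontr)
  assume "\<nexists>y. tr UNIV F y \<noteq> 0"
  define s where "s = ext_deg F UNIV"
  define Q where "Q = card F"
  have Q: "1 < Q" unfolding Q_def using subfield_card_ge_2[OF subfield] by simp
  have s: "0 < s" unfolding s_def using ext_deg_pos[OF subfield is_subfield_UNIV] by simp
  have card_UNIV: "card (UNIV :: 'a set) = Q ^ s"
    unfolding Q_def s_def using card_subfield[OF subfield is_subfield_UNIV] by simp
  define TP :: "'a poly" where "TP = (\<Sum>k<s. Polynomial.monom 1 (Q ^ k))"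
  have "degree TP \<le> Q ^ (s - 1)"
    unfolding TP_def
    by (intro degree_sum_le order.trans[OF degree_monom_le] power_increasing) (use Q in auto)
  also have "\<dots> < card (UNIV :: 'a set)"
    unfolding card_UNIV using Q s by (intro power_strict_increasing) auto
  finally have "TP = 0"
    using \<open>\<nexists>y. tr UNIV F y \<noteq> 0\<close>
    by (intro poly_eqI_degree[of UNIV])
      (auto simp: TP_def tr_def s_def Q_def poly_sum poly_monom)
  moreover have "Polynomial.coeff TP (Q ^ (s - 1)) = 1"
  proof -
    have "Q ^ k = Q ^ (s - 1) \<longleftrightarrow> k = s - 1" for k
      using Q by simp
    then show ?thesis
      using s unfolding TP_def coeff_sum coeff_monom by (simp add: sum.delta')
  qed
  ultimately show False by simp
qed

lemma trace_nondegenerate: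
  assumes "\<And>z. tr UNIV F (z * Y) = 0"
  shows "Y = 0"
proof (rule ccontr)
  assume "Y \<noteq> 0"
  obtain y where "tr UNIV F y \<noteq> 0" using trace_nonzero by blast
  moreover have "y / Y * Y = y" using \<open>Y \<noteq> 0\<close> by simp
  ultimately show False using assms[of "y / Y"] by simp
qed

end

section \<open>Lagrange interpolation\<close>

definition lagrange_basis :: "'b set \<Rightarrow> ('b \<Rightarrow> 'a::field) \<Rightarrow> 'b \<Rightarrow> 'a poly" where
  "lagrange_basis J \<beta> j = (\<Prod>l\<in>J - {j}. [:- \<beta> l, 1:])"

definition lagrange_weight :: "'b set \<Rightarrow> ('b \<Rightarrow> 'a::field) \<Rightarrow> 'b \<Rightarrow> 'a" where
  "lagrange_weight J \<beta> j = (\<Prod>l\<in>J - {j}. inverse (\<beta> j - \<beta> l))"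

lemma degree_lagrange_basis:
  "finite J \<Longrightarrow> j \<in> J \<Longrightarrow> degree (lagrange_basis J \<beta> j) = card J - 1"
  unfolding lagrange_basis_def by (subst degree_prod_eq_sum_degree) auto

lemma coeff_lagrange_basis_top:
  assumes "finite J" "j \<in> J"
  shows "Polynomial.coeff (lagrange_basis J \<beta> j) (card J - 1) = 1"
proof -
  have "lead_coeff (lagrange_basis J \<beta> j) = 1"
    unfolding lagrange_basis_def lead_coeff_prod by simp
  then show ?thesis
    using degree_lagrange_basis[OF assms, of \<beta>] by simp
qed

lemma poly_lagrange_basis: "poly (lagrange_basis J \<beta> j) x = (\<Prod>l\<in>J - {j}. x - \<beta> l)"
  unfolding lagrange_basis_def poly_prod by simp

lemma lagrange_weight_basis:
  assumes J: "finite J" "inj_on \<beta> J" and j: "j \<in> J" and t: "t \<in> J"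
  shows "lagrange_weight J \<beta> j * poly (lagrange_basis J \<beta> j) (\<beta> t) = (if t = j then 1 else 0)"
proof (cases "t = j")
  case True
  have "\<beta> j \<noteq> \<beta> l" if "l \<in> J - {j}" for l
    using inj_onD[OF J(2)] j that by blast
  then show ?thesis
    using True J(1) by (simp add: lagrange_weight_def poly_lagrange_basis flip: prod.distrib)
next
  case False
  then show ?thesis
    using J(1) t by (auto simp: poly_lagrange_basis intro!: prod_zero bexI[of _ t])
qed

lemma lagrange_interpolation:
  fixes P :: "'a::field poly"
  assumes J: "finite J" "inj_on \<beta> J" and deg: "degree P < card J"
  shows "P = (\<Sum>j\<in>J. smult (lagrange_weight J \<beta> j * poly P (\<beta> j)) (lagrange_basis J \<beta> j))"
    (is "P = ?R")
proof (rule poly_eqI_degree[of "\<beta> ` J"])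
  fix x assume "x \<in> \<beta> ` J"
  then obtain t where t: "t \<in> J" "x = \<beta> t" by blast
  have "poly ?R x = (\<Sum>j\<in>J. poly P (\<beta> j) * (lagrange_weight J \<beta> j * poly (lagrange_basis J \<beta> j) (\<beta> t)))"
    unfolding t(2) by (simp add: poly_sum mult_ac)
  also have "\<dots> = (\<Sum>j\<in>J. if t = j then poly P (\<beta> j) else 0)"
    using lagrange_weight_basis[OF J _ t(1)] by (intro sum.cong) auto
  also have "\<dots> = poly P x"
    using t J(1) by (simp add: sum.delta')
  finally show "poly P x = poly ?R x" by simp
next
  show "degree P < card (\<beta> ` J)"
    using deg card_image[OF J(2)] by simp
  have "degree ?R \<le> card J - 1"
    by (intro degree_sum_le order.trans[OF degree_smult_le])
      (simp_all add: J(1) degree_lagrange_basis[OF J(1)])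
  then show "degree ?R < card (\<beta> ` J)"
    using deg card_image[OF J(2)] by linarith
qed

text \<open>Comparing the coefficients of \<open>x^(|J|-1)\<close> in the interpolation formula.\<close>

lemma lagrange_weighted_sum_eq_0:
  fixes P :: "'a::field poly"
  assumes J: "finite J" "inj_on \<beta> J" and deg: "degree P + 2 \<le> card J"
  shows "(\<Sum>j\<in>J. lagrange_weight J \<beta> j * poly P (\<beta> j)) = 0"
proof -
  have "Polynomial.coeff P (card J - 1) = Polynomial.coeff
      (\<Sum>j\<in>J. smult (lagrange_weight J \<beta> j * poly P (\<beta> j)) (lagrange_basis J \<beta> j)) (card J - 1)"
    using lagrange_interpolation[OF J, of P] deg
    by (intro arg_cong[where f = "\<lambda>p. Polynomial.coeff p (card J - 1)"]) simp
  also have "\<dots> = (\<Sum>j\<in>J. lagrange_weight J \<beta> j * poly P (\<beta> j))"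
    unfolding coeff_sum coeff_smult
    by (intro sum.cong refl) (metis coeff_lagrange_basis_top[OF J(1)] mult.right_neutral)
  finally show ?thesis
    using deg by (simp add: coeff_eq_0)
qed

section \<open>Spans of powers\<close>

definition pow_span :: "'a::field set \<Rightarrow> 'a \<Rightarrow> nat \<Rightarrow> 'a set" where
  "pow_span C a t = {y. \<exists>c. (\<forall>m. c m \<in> C) \<and> y = (\<Sum>m<t. c m * a ^ m)}"

lemma pow_spanI: "(\<And>m. c m \<in> C) \<Longrightarrow> (\<Sum>m<t. c m * a ^ m) \<in> pow_span C a t"
  unfolding pow_span_def by blast

lemma pow_span_mono:
  assumes C': "is_subfield C'" and "C \<subseteq> C'" and "t \<le> t'"
  shows "pow_span C a t \<subseteq> pow_span C' a t'"
proof
  fix y assume "y \<in> pow_span C a t"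
  then obtain c where c: "\<And>m. c m \<in> C" "y = (\<Sum>m<t. c m * a ^ m)" unfolding pow_span_def by blast
  have "y = (\<Sum>m<t'. (if m < t then c m else 0) * a ^ m)"
    unfolding c(2) using \<open>t \<le> t'\<close> by (intro sum.mono_neutral_cong_left) auto
  also have "\<dots> \<in> pow_span C' a t'"
    using c(1) \<open>C \<subseteq> C'\<close> subfield_zero_closed[OF C'] by (intro pow_spanI) auto
  finally show "y \<in> pow_span C' a t'" .
qed

context
  fixes C :: "'a::field set" and a :: 'a and t :: nat
  assumes subfield: "is_subfield C"
begin

lemma pow_span_zero: "0 \<in> pow_span C a t"
  using pow_spanI[where c = "\<lambda>_. 0" and C = C and t = t and a = a] subfield_zero_closed[OF subfield] by simp

lemma pow_span_add:
  assumes "x \<in> pow_span C a t" "y \<in> pow_span C a t"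
  shows "x + y \<in> pow_span C a t"
proof -
  obtain c where c: "\<And>m. c m \<in> C" "x = (\<Sum>m<t. c m * a ^ m)" using assms(1) unfolding pow_span_def by blast
  obtain d where d: "\<And>m. d m \<in> C" "y = (\<Sum>m<t. d m * a ^ m)" using assms(2) unfolding pow_span_def by blast
  have "x + y = (\<Sum>m<t. (c m + d m) * a ^ m)"
    unfolding c(2) d(2) by (simp add: sum.distrib distrib_right)
  also have "\<dots> \<in> pow_span C a t"
    using c(1) d(1) by (intro pow_spanI subfield_add_closed[OF subfield])
  finally show ?thesis .
qed

lemma pow_span_scale:
  assumes "x \<in> C" "y \<in> pow_span C a t"
  shows "x * y \<in> pow_span C a t"
proof -
  obtain d where d: "\<And>m. d m \<in> C" "y = (\<Sum>m<t. d m * a ^ m)" using assms(2) unfolding pow_span_def by blast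
  have "x * y = (\<Sum>m<t. (x * d m) * a ^ m)"
    unfolding d(2) by (simp add: sum_distrib_left mult.assoc)
  also have "\<dots> \<in> pow_span C a t"
    using assms(1) d(1) by (intro pow_spanI subfield_mult_closed[OF subfield])
  finally show ?thesis .
qed

lemma pow_span_sum: "(\<And>i. i \<in> I \<Longrightarrow> f i \<in> pow_span C a t) \<Longrightarrow> (\<Sum>i\<in>I. f i) \<in> pow_span C a t"
  by (induction I rule: infinite_finite_induct) (auto intro: pow_span_zero pow_span_add)

lemma pow_span_base:
  assumes "0 < t" "x \<in> C"
  shows "x \<in> pow_span C a t"
proof -
  have "(\<Sum>m<t. (if m = 0 then x else 0) * a ^ m) = (\<Sum>m<t. if m = 0 then x else 0)"
    by (rule sum.cong) auto
  also have "\<dots> = x"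
    using assms(1) by (simp add: sum.delta)
  finally show ?thesis
    using pow_spanI[where c = "\<lambda>m. if m = 0 then x else 0" and C = C and t = t and a = a] assms(2) subfield_zero_closed[OF subfield]
    by simp
qed

lemma pow_span_mult_gen:
  assumes rel: "a ^ t \<in> pow_span C a t" and y: "y \<in> pow_span C a t"
  shows "a * y \<in> pow_span C a t"
proof (cases t)
  case 0
  then show ?thesis using y by (simp add: pow_span_def)
next
  case (Suc t')
  obtain c where c: "\<And>m. c m \<in> C" "y = (\<Sum>m<t. c m * a ^ m)"
    using y unfolding pow_span_def by blast
  define c' where "c' m = (if m = 0 then 0 else c (m - 1))" for m
  have "a * y = (\<Sum>m<Suc t'. c m * a ^ Suc m)"
    unfolding c(2) Suc by (simp add: sum_distrib_left algebra_simps)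
  also have "\<dots> = (\<Sum>m<t'. c m * a ^ Suc m) + c t' * a ^ t"
    using Suc by simp
  also have "(\<Sum>m<t'. c m * a ^ Suc m) = (\<Sum>m<t. c' m * a ^ m)"
    unfolding Suc sum.lessThan_Suc_shift by (simp add: c'_def)
  also have "(\<Sum>m<t. c' m * a ^ m) + c t' * a ^ t \<in> pow_span C a t"
    using c(1) subfield_zero_closed[OF subfield]
    by (intro pow_span_add pow_span_scale[OF _ rel] pow_spanI) (auto simp: c'_def)
  finally show ?thesis .
qed

lemma pow_span_power_mult:
  "a ^ t \<in> pow_span C a t \<Longrightarrow> y \<in> pow_span C a t \<Longrightarrow> a ^ k * y \<in> pow_span C a t"
  by (induction k) (simp_all add: mult.assoc pow_span_mult_gen)

lemma pow_span_mult:
  assumes rel: "a ^ t \<in> pow_span C a t" and x: "x \<in> pow_span C a t" and y: "y \<in> pow_span C a t"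
  shows "x * y \<in> pow_span C a t"
proof -
  obtain c where c: "\<And>m. c m \<in> C" "y = (\<Sum>m<t. c m * a ^ m)"
    using y unfolding pow_span_def by blast
  have "x * y = (\<Sum>m<t. c m * (a ^ m * x))"
    unfolding c(2) by (simp add: sum_distrib_left algebra_simps)
  also have "\<dots> \<in> pow_span C a t"
    by (intro pow_span_sum pow_span_scale[OF c(1)] pow_span_power_mult[OF rel x])
  finally show ?thesis .
qed

end

text \<open>Pigeonhole: the \<open>|F0|^(p+1)\<close> combinations of \<open>1, a, \<dots>, a^p\<close> cannot all differ inside \<open>F0(a)\<close>,
  which has \<open>|F0|^p\<close> elements.\<close>

lemma exists_relation_of_powers:
  fixes F0 :: "'a::{field,finite} set"
  assumes F0: "is_subfield F0" and deg: "ext_deg F0 (field_gen F0 {a}) = p"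
  shows "\<exists>\<delta>. (\<forall>m. \<delta> m \<in> F0) \<and> (\<forall>m>p. \<delta> m = 0) \<and> (\<exists>m. \<delta> m \<noteq> 0) \<and> (\<Sum>m\<le>p. \<delta> m * a ^ m) = 0"
proof -
  define G where "G = field_gen F0 {a}"
  have G: "is_subfield G" "F0 \<subseteq> G" "a \<in> G"
    unfolding G_def using is_subfield_field_gen field_gen_base_subset field_gen_gens_subset by blast+
  define Dom where "Dom = Pi\<^sub>E {..p} (\<lambda>_. F0)"
  define \<phi> where "\<phi> c = (\<Sum>m\<le>p. c m * a ^ m)" for c
  have "\<phi> ` Dom \<subseteq> G"
    using G by (auto simp: \<phi>_def Dom_def PiE_iff intro!: subfield_sum_closed[OF G(1)]
        subfield_mult_closed[OF G(1)] subfield_power_closed[OF G(1)])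
  moreover have "card G < card Dom"
  proof -
    have "card G = card F0 ^ p"
      using card_subfield[OF F0 G(1,2)] deg by (simp add: G_def)
    moreover have "card Dom = card F0 ^ Suc p"
      by (simp add: Dom_def card_PiE)
    moreover have "1 < card F0"
      using subfield_card_ge_2[OF F0] by simp
    ultimately show ?thesis by simp
  qed
  ultimately have "\<not> inj_on \<phi> Dom"
    using card_inj_on_le[of \<phi> Dom G] by auto
  then obtain c c' where cc: "c \<in> Dom" "c' \<in> Dom" "\<phi> c = \<phi> c'" "c \<noteq> c'"
    unfolding inj_on_def by blast
  define \<delta> where "\<delta> m = c m - c' m" for m
  have outside: "\<delta> m = 0" if "p < m" for m
    using that PiE_arb[OF cc(1)[unfolded Dom_def]] PiE_arb[OF cc(2)[unfolded Dom_def]]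
    by (simp add: \<delta>_def)
  have "\<delta> m \<in> F0" for m
  proof (cases "m \<le> p")
    case True
    then have "c m \<in> F0" "c' m \<in> F0"
      using cc(1,2) by (auto simp: Dom_def)
    then show ?thesis
      by (simp add: \<delta>_def subfield_diff_closed[OF F0])
  qed (simp add: outside subfield_zero_closed[OF F0])
  moreover have "\<exists>m. \<delta> m \<noteq> 0"
    using cc(4) by (auto simp: \<delta>_def fun_eq_iff)
  moreover have "(\<Sum>m\<le>p. \<delta> m * a ^ m) = 0"
    using cc(3) by (simp add: \<phi>_def \<delta>_def left_diff_distrib sum_subtractf)
  ultimately show ?thesis
    using outside by blast
qed

lemma relation_imp_power_in_pow_span:
  fixes C :: "'a::field set"
  assumes C: "is_subfield C" and \<delta>: "\<And>m. \<delta> m \<in> C" "\<And>m. p < m \<Longrightarrow> \<delta> m = 0" "\<exists>m. \<delta> m \<noteq> 0"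
    and rel: "(\<Sum>m\<le>p. \<delta> m * a ^ m) = 0"
  shows "\<exists>t\<le>p. a ^ t \<in> pow_span C a t"
proof -
  define Z where "Z = {m. \<delta> m \<noteq> 0}"
  have "finite Z"
    using \<delta>(2) by (intro finite_subset[of Z "{..p}"]) (auto simp: Z_def not_less[symmetric])
  moreover have "Z \<noteq> {}"
    using \<delta>(3) by (simp add: Z_def)
  ultimately have "Max Z \<in> Z" and Max_ge: "\<And>m. m \<in> Z \<Longrightarrow> m \<le> Max Z"
    by simp_all
  define t where "t = Max Z"
  have t: "\<delta> t \<noteq> 0" "t \<le> p"
    using \<open>Max Z \<in> Z\<close> \<delta>(2) by (auto simp: t_def Z_def not_less[symmetric])
  have above: "\<delta> m = 0" if "t < m" for m
    using Max_ge[of m] that by (force simp: t_def Z_def)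
  have "(\<Sum>m<t. \<delta> m * a ^ m) + \<delta> t * a ^ t = (\<Sum>m\<le>t. \<delta> m * a ^ m)"
    unfolding lessThan_Suc_atMost[symmetric] by simp
  also have "\<dots> = 0"
    using t(2) above rel by (subst sum.mono_neutral_left[of "{..p}"]) auto
  finally have "\<delta> t * a ^ t = - (\<Sum>m<t. \<delta> m * a ^ m)"
    by (simp add: eq_neg_iff_add_eq_0 add.commute)
  then have "a ^ t = - (\<Sum>m<t. \<delta> m * a ^ m) / \<delta> t"
    using t(1) by (metis nonzero_mult_div_cancel_left)
  also have "\<dots> = (\<Sum>m<t. (- \<delta> m / \<delta> t) * a ^ m)"
    unfolding sum_negf[symmetric] sum_divide_distrib by (rule sum.cong) simp_all
  also have "\<dots> \<in> pow_span C a t"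
    using \<delta>(1) by (intro pow_spanI subfield_divide_closed[OF C] subfield_uminus_closed[OF C])
  finally show ?thesis
    using t(2) by blast
qed

lemma pow_span_eq_UNIV:
  fixes F0 Fi :: "'a::{field,finite} set"
  assumes F0: "is_subfield F0" and Fi: "is_subfield Fi" "F0 \<subseteq> Fi"
    and deg: "ext_deg F0 (field_gen F0 {a}) = p" and gen: "field_gen Fi {a} = UNIV"
  shows "pow_span Fi a p = UNIV"
proof -
  obtain t where t: "t \<le> p" "a ^ t \<in> pow_span F0 a t"
    using exists_relation_of_powers[OF F0 deg] relation_imp_power_in_pow_span[OF F0] by blast
  have "t \<noteq> 0"
    using t(2) by (cases t) (auto simp: pow_span_def)
  then have "a ^ p * 1 \<in> pow_span F0 a t"
    using t(2) pow_span_base[OF F0, of t 1] subfield_one_closed[OF F0]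
    by (intro pow_span_power_mult[OF F0]) auto
  then have rel: "a ^ p \<in> pow_span Fi a p"
    using pow_span_mono[OF Fi(1,2) t(1)] by auto
  define S where "S = pow_span Fi a p"
  have base: "Fi \<subseteq> S"
    unfolding S_def using pow_span_base[OF Fi(1)] t(1) \<open>t \<noteq> 0\<close> by auto
  have "is_subfield S"
  proof (rule finite_subring_is_subfield)
    show "0 \<in> S" "1 \<in> S"
      using base subfield_zero_closed[OF Fi(1)] subfield_one_closed[OF Fi(1)] by auto
    show "- x \<in> S" if "x \<in> S" for x
      using pow_span_scale[OF Fi(1) subfield_uminus_closed[OF Fi(1) subfield_one_closed[OF Fi(1)]]] that
      by (auto simp: S_def)
  qed (auto simp: S_def intro: pow_span_add[OF Fi(1)] pow_span_mult[OF Fi(1) rel])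
  moreover have "a \<in> S"
    using pow_span_mult_gen[OF Fi(1) rel, of 1] base subfield_one_closed[OF Fi(1)] by (auto simp: S_def)
  ultimately have "field_gen Fi {a} \<subseteq> S"
    using base by (intro field_gen_least) auto
  then show ?thesis
    using gen by (auto simp: S_def)
qed

lemma trace_orthogonal_pow_span:
  fixes F :: "'a::{field,finite} set"
  assumes F: "is_subfield F" "card F = CHAR('a) ^ e"
    and orth: "\<And>m. m < t \<Longrightarrow> tr UNIV F (a ^ m * Y) = 0" and z: "z \<in> pow_span F a t"
  shows "tr UNIV F (z * Y) = 0"
proof -
  obtain c where c: "\<And>m. c m \<in> F" "z = (\<Sum>m<t. c m * a ^ m)"
    using z unfolding pow_span_def by blast
  have "tr UNIV F (z * Y) = (\<Sum>m<t. c m * tr UNIV F (a ^ m * Y))"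
    unfolding c(2) sum_distrib_right by (simp add: trace_sum[OF F] trace_scale[OF F c(1)] mult.assoc)
  then show ?thesis
    using orth by simp
qed

section \<open>Fields generated by elements of prime degrees\<close>

lemma prod_distinct_primes_dvd:
  fixes p :: "'b \<Rightarrow> nat"
  assumes "finite I" "inj_on p I" "\<forall>l\<in>I. prime (p l) \<and> p l dvd e"
  shows "(\<Prod>l\<in>I. p l) dvd e"
  using assms
proof (induction I rule: finite_induct)
  case (insert x I)
  then have inj: "inj_on p I" "p x \<notin> p ` I"
    and prem: "\<forall>l\<in>I. prime (p l) \<and> p l dvd e" "prime (p x)" "p x dvd e"
    by simp_all
  have "(\<Prod>l\<in>I. p l) dvd e"
    using insert.IH inj prem by blast
  moreover have "coprime (p x) (\<Prod>l\<in>I. p l)"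
  proof (rule prod_coprime_right)
    fix l assume "l \<in> I"
    then show "coprime (p x) (p l)"
      using inj prem by (intro primes_coprime) auto
  qed
  ultimately have "p x * (\<Prod>l\<in>I. p l) dvd e"
    by (rule divides_mult[OF prem(3)])
  then show ?case
    using insert.hyps by simp
qed simp

text \<open>By the tower law each \<open>p\<^sub>l\<close> divides \<open>[K : F0]\<close>, which divides \<open>\<Prod>\<^sub>l p\<^sub>l = [UNIV : F0]\<close>.\<close>

lemma field_gen_prime_degrees_eq_UNIV:
  fixes F0 :: "'a::{field,finite} set"
  assumes F0: "is_subfield F0" and card_UNIV: "card (UNIV :: 'a set) = card F0 ^ (\<Prod>l\<in>I. p l)"
    and I: "finite I" "inj_on p I" and primes: "\<forall>l\<in>I. prime (p l)"
    and deg: "\<forall>l\<in>I. ext_deg F0 (field_gen F0 {\<alpha> l}) = p l"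
  shows "field_gen F0 (\<alpha> ` I) = UNIV"
proof -
  define K where "K = field_gen F0 (\<alpha> ` I)"
  have K: "is_subfield K" "F0 \<subseteq> K" "\<alpha> ` I \<subseteq> K"
    unfolding K_def by (rule is_subfield_field_gen field_gen_base_subset field_gen_gens_subset)+
  have "p l dvd ext_deg F0 K" if l: "l \<in> I" for l
  proof -
    have "field_gen F0 {\<alpha> l} \<subseteq> K"
      using K l by (intro field_gen_least) auto
    then show ?thesis
      using ext_deg_tower[OF F0 is_subfield_field_gen K(1) field_gen_base_subset] deg l by simp
  qed
  then have "(\<Prod>l\<in>I. p l) dvd ext_deg F0 K"
    using prod_distinct_primes_dvd[OF I] primes by blast
  moreover have "ext_deg F0 UNIV = (\<Prod>l\<in>I. p l)"
    using card_subfield[OF F0 is_subfield_UNIV] card_UNIV subfield_card_ge_2[OF F0] by simp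
  then have "ext_deg F0 K dvd (\<Prod>l\<in>I. p l)"
    using ext_deg_tower[OF F0 K(1) is_subfield_UNIV K(2)] by (metis dvd_triv_left subset_UNIV)
  ultimately have "ext_deg F0 K = ext_deg F0 UNIV"
    using \<open>ext_deg F0 UNIV = (\<Prod>l\<in>I. p l)\<close> by (simp add: dvd_antisym)
  then have "card K = card (UNIV :: 'a set)"
    using card_subfield[OF F0 K(1,2)] card_subfield[OF F0 is_subfield_UNIV] by simp
  then show ?thesis
    unfolding K_def[symmetric] by (intro card_subset_eq) auto
qed

section \<open>Decoding in the FTP code\<close>

lemma eval_pm_mult:
  assumes "f \<in> carrier_mat nr m" "g \<in> carrier_mat m nc"
  shows "eval_pm x (f * g) = eval_pm x f * eval_pm x g"
  using assms by (intro eq_matI) (auto simp: eval_pm_def scalar_prod_def poly_sum)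

lemma degree_mult_mat_le:
  assumes f: "f \<in> carrier_mat nr m" and g: "g \<in> carrier_mat m nc"
    and deg_f: "\<forall>e\<in>elements_mat f. degree e \<le> df" and deg_g: "\<forall>e\<in>elements_mat g. degree e \<le> dg"
  shows "\<forall>e\<in>elements_mat (f * g). degree e \<le> df + dg"
proof
  fix e assume "e \<in> elements_mat (f * g)"
  then obtain x y where xy: "x < nr" "y < nc" "e = (f * g) $$ (x, y)"
    using f g by auto
  have "degree (f $$ (x, k) * g $$ (k, y)) \<le> df + dg" if "k < m" for k
  proof -
    have "f $$ (x, k) \<in> elements_mat f" "g $$ (k, y) \<in> elements_mat g"
      using f g xy that by auto
    then have "degree (f $$ (x, k)) \<le> df" "degree (g $$ (k, y)) \<le> dg"
      using deg_f deg_g by auto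
    then show ?thesis
      using degree_mult_le[of "f $$ (x, k)" "g $$ (k, y)"] by linarith
  qed
  then show "degree e \<le> df + dg"
    using f g xy by (auto simp: scalar_prod_def intro!: degree_sum_le)
qed

lemma exists_decoder:
  assumes "\<And>x y. x \<in> V \<Longrightarrow> y \<in> V \<Longrightarrow> r x = r y \<Longrightarrow> e x = e y"
  shows "\<exists>Dec. \<forall>x\<in>V. Dec (r x) = e x"
proof (intro exI ballI)
  fix x assume x: "x \<in> V"
  then have "inv_into V r (r x) \<in> V" "r (inv_into V r (r x)) = r x"
    by (simp_all add: inv_into_into f_inv_into_f)
  then show "(e \<circ> inv_into V r) (r x) = e x"
    using assms[OF _ x] by simp
qed

lemma ftp_k_vanishes:
  "j \<in> {1..n} - ({L+1..L+Ni} \<union> {i}) \<Longrightarrow> ftp_k \<alpha> L n Ni i (\<alpha> j) = 0"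
  unfolding ftp_k_def by (rule prod_zero) auto

lemma ftp_weight_nonzero:
  assumes "i \<in> {1..n}" "inj_on \<alpha> {1..n}"
  shows "ftp_v \<alpha> n i * ftp_k \<alpha> L n Ni i (\<alpha> i) \<noteq> 0"
proof -
  have "\<alpha> i - \<alpha> l \<noteq> 0" if "l \<in> {1..n} - {i}" for l
    using inj_onD[OF assms(2)] assms(1) that by fastforce
  then show ?thesis
    unfolding ftp_v_def ftp_k_def by auto
qed

lemma ftp_lagrange_identity:
  assumes i: "i \<in> {1..L}" and n: "L + Ni \<le> n" and inj: "inj_on \<alpha> {1..n}"
    and deg: "degree G < Ni"
  shows "ftp_v \<alpha> n i * ftp_k \<alpha> L n Ni i (\<alpha> i) * poly G (\<alpha> i) =
    - (\<Sum>j\<in>{L+1..L+Ni}. ftp_v \<alpha> n j * ftp_k \<alpha> L n Ni i (\<alpha> j) * poly G (\<alpha> j))"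
proof -
  define U where "U = {L+1..L+Ni}"
  define Z where "Z = {1..n} - (U \<union> {i})"
  define K where "K = (\<Prod>l\<in>Z. [:- \<alpha> l, 1:])"
  define f where "f j = ftp_v \<alpha> n j * ftp_k \<alpha> L n Ni i (\<alpha> j) * poly G (\<alpha> j)" for j
  have U: "i \<notin> U" "insert i U \<subseteq> {1..n}"
    using i n by (auto simp: U_def)
  have "card Z = n - Suc Ni"
    using U card_Diff_subset[of "insert i U" "{1..n}"] by (simp add: Z_def U_def)
  then have "degree K = n - Suc Ni"
    unfolding K_def by (subst degree_prod_eq_sum_degree) auto
  then have "degree (K * G) + 2 \<le> card {1..n}"
    using degree_mult_le[of K G] deg n i by auto
  then have "(\<Sum>j\<in>{1..n}. lagrange_weight {1..n} \<alpha> j * poly (K * G) (\<alpha> j)) = 0"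
    by (rule lagrange_weighted_sum_eq_0[OF finite_atLeastAtMost inj])
  moreover have "lagrange_weight {1..n} \<alpha> j * poly (K * G) (\<alpha> j) = f j" for j
    by (simp add: f_def K_def Z_def U_def lagrange_weight_def ftp_v_def ftp_k_def poly_prod)
  ultimately have "(\<Sum>j\<in>{1..n}. f j) = 0" by simp
  moreover have "(\<Sum>j\<in>{1..n}. f j) = (\<Sum>j\<in>insert i U. f j)"
    using U(2) ftp_k_vanishes[of _ n L Ni i \<alpha>]
    by (intro sum.mono_neutral_right) (auto simp: f_def U_def)
  ultimately show ?thesis
    using U(1) by (simp add: f_def U_def eq_neg_iff_add_eq_0)
qed

lemma ftp_responses_zero_imp_root:
  fixes \<alpha> :: "nat \<Rightarrow> 'a::{field,finite}" and Fi :: "'a set"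
  assumes i: "i \<in> {1..L}" and n: "L + Ni \<le> n" and inj: "inj_on \<alpha> {1..n}"
    and Fi: "is_subfield Fi" "card Fi = CHAR('a) ^ e" and U_Fi: "\<alpha> ` {L+1..L+Ni} \<subseteq> Fi"
    and span: "pow_span Fi (\<alpha> i) p = UNIV" and deg: "p + degree H \<le> Ni"
    and resp: "\<And>j. j \<in> {L+1..L+Ni} \<Longrightarrow>
      tr UNIV Fi (ftp_v \<alpha> n j * ftp_k \<alpha> L n Ni i (\<alpha> j) * poly H (\<alpha> j)) = 0"
  shows "poly H (\<alpha> i) = 0"
proof -
  define Y where "Y = ftp_v \<alpha> n i * ftp_k \<alpha> L n Ni i (\<alpha> i) * poly H (\<alpha> i)"
  have orth: "tr UNIV Fi (\<alpha> i ^ m * Y) = 0" if "m < p" for m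
  proof -
    have "degree (Polynomial.monom 1 m * H) < Ni"
      using degree_mult_le[of "Polynomial.monom 1 m" H] degree_monom_le[of "1::'a" m] that deg by linarith
    from ftp_lagrange_identity[OF i n inj this]
    have "\<alpha> i ^ m * Y = - (\<Sum>j\<in>{L+1..L+Ni}.
        \<alpha> j ^ m * (ftp_v \<alpha> n j * ftp_k \<alpha> L n Ni i (\<alpha> j) * poly H (\<alpha> j)))"
      by (simp add: Y_def poly_monom mult_ac)
    also have "tr UNIV Fi \<dots> = 0"
      using U_Fi resp
      by (simp add: trace_uminus[OF Fi] trace_sum[OF Fi] trace_scale[OF Fi]
          subfield_power_closed[OF Fi(1)] image_subset_iff)
    finally show ?thesis .
  qed
  have "tr UNIV Fi (z * Y) = 0" for z
    using trace_orthogonal_pow_span[OF Fi orth] span by simp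
  then have "Y = 0"
    by (rule trace_nondegenerate[OF Fi])
  then show ?thesis
    using ftp_weight_nonzero[of i n \<alpha> L Ni] i n inj by (simp add: Y_def)
qed

definition ftp_responses ::
    "'a::field set \<Rightarrow> (nat \<Rightarrow> 'a) \<Rightarrow> nat \<Rightarrow> nat \<Rightarrow> nat \<Rightarrow> nat \<Rightarrow> 'a poly mat \<Rightarrow> 'a mat list" where
  "ftp_responses Fi \<alpha> L n Ni i h = map (\<lambda>j. map_mat (tr UNIV Fi)
     ((ftp_v \<alpha> n (L + j) * ftp_k \<alpha> L n Ni i (\<alpha> (L + j))) \<cdot>\<^sub>m eval_pm (\<alpha> (L + j)) h))
     [1..<Ni + 1]"

lemma ftp_responses_eq_imp_trace_eq:
  assumes same: "ftp_responses Fi \<alpha> L n Ni i h = ftp_responses Fi \<alpha> L n Ni i h'"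
    and j: "j \<in> {L+1..L+Ni}" and h: "h \<in> carrier_mat a c" "h' \<in> carrier_mat a c"
    and xy: "x < a" "y < c"
  shows "tr UNIV Fi (ftp_v \<alpha> n j * ftp_k \<alpha> L n Ni i (\<alpha> j) * poly (h $$ (x, y)) (\<alpha> j)) =
    tr UNIV Fi (ftp_v \<alpha> n j * ftp_k \<alpha> L n Ni i (\<alpha> j) * poly (h' $$ (x, y)) (\<alpha> j))"
proof -
  let ?r = "\<lambda>k h. map_mat (tr UNIV Fi)
    ((ftp_v \<alpha> n (L + k) * ftp_k \<alpha> L n Ni i (\<alpha> (L + k))) \<cdot>\<^sub>m eval_pm (\<alpha> (L + k)) h)"
  have all: "\<forall>k\<in>set [1..<Ni + 1]. ?r k h = ?r k h'"
    using same unfolding ftp_responses_def map_eq_conv .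
  have mem: "j - L \<in> set [1..<Ni + 1]" and jL: "L + (j - L) = j"
    using j by auto
  have "map_mat (tr UNIV Fi) (ftp_v \<alpha> n j * ftp_k \<alpha> L n Ni i (\<alpha> j) \<cdot>\<^sub>m eval_pm (\<alpha> j) h) =
      map_mat (tr UNIV Fi) (ftp_v \<alpha> n j * ftp_k \<alpha> L n Ni i (\<alpha> j) \<cdot>\<^sub>m eval_pm (\<alpha> j) h')"
    using bspec[OF all mem] unfolding jL .
  from arg_cong[OF this, of "\<lambda>M. M $$ (x, y)"] show ?thesis
    using h xy by (simp add: eval_pm_def)
qed

lemma ftp_responses_determine_eval:
  fixes \<alpha> :: "nat \<Rightarrow> 'a::{field,finite}" and Fi :: "'a set"
  assumes i: "i \<in> {1..L}" and n: "L + Ni \<le> n" and inj: "inj_on \<alpha> {1..n}"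
    and Fi: "is_subfield Fi" "card Fi = CHAR('a) ^ e" and U_Fi: "\<alpha> ` {L+1..L+Ni} \<subseteq> Fi"
    and span: "pow_span Fi (\<alpha> i) p = UNIV" and deg: "p + D \<le> Ni"
    and h: "h \<in> carrier_mat a c" "\<forall>e\<in>elements_mat h. degree e \<le> D"
    and h': "h' \<in> carrier_mat a c" "\<forall>e\<in>elements_mat h'. degree e \<le> D"
    and same: "ftp_responses Fi \<alpha> L n Ni i h = ftp_responses Fi \<alpha> L n Ni i h'"
  shows "eval_pm (\<alpha> i) h = eval_pm (\<alpha> i) h'"
proof (rule eq_matI)
  fix x y assume "x < dim_row (eval_pm (\<alpha> i) h')" "y < dim_col (eval_pm (\<alpha> i) h')"
  then have xy: "x < a" "y < c"
    using h'(1) by (simp_all add: eval_pm_def)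
  define H where "H = h $$ (x, y) - h' $$ (x, y)"
  have "degree H \<le> D"
    using h h' xy unfolding H_def by (intro degree_diff_le) auto
  moreover have "tr UNIV Fi (ftp_v \<alpha> n j * ftp_k \<alpha> L n Ni i (\<alpha> j) * poly H (\<alpha> j)) = 0"
    if "j \<in> {L+1..L+Ni}" for j
    using ftp_responses_eq_imp_trace_eq[OF same that h(1) h'(1) xy]
    by (simp add: H_def right_diff_distrib trace_diff[OF Fi])
  ultimately show "eval_pm (\<alpha> i) h $$ (x, y) = eval_pm (\<alpha> i) h' $$ (x, y)"
    using ftp_responses_zero_imp_root[OF i n inj Fi U_Fi span, of H] deg h(1) h'(1) xy
    by (simp add: eval_pm_def H_def)
qed (use h(1) h'(1) in \<open>simp_all add: eval_pm_def\<close>)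

lemma ftp_F_pow_span_eq_UNIV:
  fixes F0 :: "'a::{field,finite} set"
  assumes F0: "is_subfield F0" and card_UNIV: "card (UNIV :: 'a set) = card F0 ^ (\<Prod>l\<in>{1..L}. p l)"
    and inj: "inj_on p {1..L}" and primes: "\<forall>l\<in>{1..L}. prime (p l)"
    and deg: "\<forall>l\<in>{1..L}. ext_deg F0 (field_gen F0 {\<alpha> l}) = p l" and i: "i \<in> {1..L}"
  shows "pow_span (ftp_F F0 \<alpha> L i) (\<alpha> i) (p i) = UNIV"
proof -
  define Fi where "Fi = ftp_F F0 \<alpha> L i"
  have Fi: "is_subfield Fi" "F0 \<subseteq> Fi" "\<alpha> ` ({1..L} - {i}) \<subseteq> Fi"
    unfolding Fi_def ftp_F_def by (rule is_subfield_field_gen field_gen_base_subset field_gen_gens_subset)+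
  have "field_gen F0 (\<alpha> ` {1..L}) \<subseteq> field_gen Fi {\<alpha> i}"
    using Fi field_gen_base_subset[of Fi "{\<alpha> i}"] field_gen_gens_subset[of "{\<alpha> i}" Fi]
    by (intro field_gen_least is_subfield_field_gen) auto
  then have "field_gen Fi {\<alpha> i} = UNIV"
    using field_gen_prime_degrees_eq_UNIV[OF F0 card_UNIV _ inj primes deg] by auto
  moreover have "ext_deg F0 (field_gen F0 {\<alpha> i}) = p i"
    using deg i by blast
  ultimately show ?thesis
    unfolding Fi_def[symmetric] by (intro pow_span_eq_UNIV[OF F0 Fi(1,2)])
qed

lemma ftp_points_inj:
  fixes F0 :: "'a::{field,finite} set" and L n :: nat
  assumes F0: "is_subfield F0" and p_inj: "inj_on p {1..L}" and p_ge: "\<forall>l\<in>{1..L}. 2 \<le> p l"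
    and deg: "\<forall>l\<in>{1..L}. ext_deg F0 (field_gen F0 {\<alpha> l}) = p l"
    and in_F0: "\<forall>j\<in>{L+1..n}. \<alpha> j \<in> F0" and dist: "inj_on \<alpha> {L+1..n}"
  shows "inj_on \<alpha> {1..n}"
proof (rule inj_on_subset[of _ "{1..L} \<union> {L+1..n}"])
  have not_F0: "\<alpha> l \<notin> F0" if l: "l \<in> {1..L}" for l
  proof
    assume "\<alpha> l \<in> F0"
    then have "ext_deg F0 (field_gen F0 {\<alpha> l}) = 1"
      by (rule ext_deg_field_gen_mem[OF F0])
    then have "p l = 1"
      using deg l by simp
    moreover have "2 \<le> p l"
      using p_ge l by blast
    ultimately show False by simp
  qed
  have "\<alpha> x \<noteq> \<alpha> y" if "x \<in> {1..L}" "y \<in> {L+1..n}" for x y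
    using not_F0[OF that(1)] in_F0 that(2) by auto
  then have "\<alpha> ` ({1..L} - {L+1..n}) \<inter> \<alpha> ` ({L+1..n} - {1..L}) = {}"
    by blast
  moreover have "inj_on \<alpha> {1..L}"
  proof (rule inj_onI)
    fix x y assume xy: "x \<in> {1..L}" "y \<in> {1..L}" "\<alpha> x = \<alpha> y"
    have "p x = ext_deg F0 (field_gen F0 {\<alpha> x})"
      using deg xy(1) by simp
    also have "\<dots> = p y"
      using deg xy(2,3) by simp
    finally show "x = y"
      using inj_onD[OF p_inj] xy(1,2) by blast
  qed
  ultimately show "inj_on \<alpha> ({1..L} \<union> {L+1..n})"
    using dist by (simp add: inj_on_Un)
qed auto

lemma ftp_decoder_exists:
  fixes F0 :: "'a::{field,finite} set" and \<alpha> :: "nat \<Rightarrow> 'a"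
  assumes F0: "is_subfield F0" "card F0 = r ^ m" and r: "prime r"
    and card_UNIV: "card (UNIV :: 'a set) = card F0 ^ (\<Prod>l\<in>{1..L}. p l)"
    and p: "inj_on p {1..L}" "\<forall>l\<in>{1..L}. prime (p l)"
    and deg: "\<forall>l\<in>{1..L}. ext_deg F0 (field_gen F0 {\<alpha> l}) = p l"
    and inj: "inj_on \<alpha> {1..n}" and in_F0: "\<forall>j\<in>{L+1..n}. \<alpha> j \<in> F0"
    and i: "i \<in> {1..L}" and n: "L + Ni \<le> n" and D: "p i + D \<le> Ni"
  shows "\<exists>Dec. \<forall>h\<in>{h \<in> carrier_mat a c. \<forall>e\<in>elements_mat h. degree e \<le> D}.
    Dec (ftp_responses (ftp_F F0 \<alpha> L i) \<alpha> L n Ni i h) = eval_pm (\<alpha> i) h"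
proof (rule exists_decoder)
  define Fi where "Fi = ftp_F F0 \<alpha> L i"
  have Fi: "is_subfield Fi" "F0 \<subseteq> Fi"
    unfolding Fi_def ftp_F_def by (rule is_subfield_field_gen field_gen_base_subset)+
  have "card (UNIV :: 'a set) = r ^ (m * (\<Prod>l\<in>{1..L}. p l))"
    using card_UNIV F0(2) by (simp add: power_mult)
  then obtain e where card_Fi: "card Fi = CHAR('a) ^ e"
    using subfield_card_CHAR_power[OF Fi(1) r] by blast
  have span: "pow_span Fi (\<alpha> i) (p i) = UNIV"
    unfolding Fi_def by (rule ftp_F_pow_span_eq_UNIV[OF F0(1) card_UNIV p deg i])
  have U_Fi: "\<alpha> ` {L+1..L+Ni} \<subseteq> Fi"
    using in_F0 n Fi(2) by auto
  fix h h' :: "'a poly mat"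
  assume "h \<in> {h \<in> carrier_mat a c. \<forall>e\<in>elements_mat h. degree e \<le> D}"
    "h' \<in> {h \<in> carrier_mat a c. \<forall>e\<in>elements_mat h. degree e \<le> D}"
  then show "ftp_responses (ftp_F F0 \<alpha> L i) \<alpha> L n Ni i h = ftp_responses (ftp_F F0 \<alpha> L i) \<alpha> L n Ni i h' \<Longrightarrow>
      eval_pm (\<alpha> i) h = eval_pm (\<alpha> i) h'"
    unfolding Fi_def[symmetric] mem_Collect_eq
    by (elim conjE) (rule ftp_responses_determine_eval[OF i n inj Fi(1) card_Fi U_Fi span D])
qed

theorem lemma1:
  fixes L T a b c q0 n i :: nat and p N :: "nat \<Rightarrow> nat"
    and F0 :: "'a::{field,finite} set" and \<alpha> :: "nat \<Rightarrow> 'a"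
  assumes LT: "L > 0" "T > 0"
    and primes: "\<forall>l\<in>{1..L}. prime (p l)"
    and incr: "\<forall>l m. 1 \<le> l \<longrightarrow> l < m \<longrightarrow> m \<le> L \<longrightarrow> p l < p m"
    and N_def: "\<forall>l\<in>{1..L}. N l = p l + 2 * L + 2 * T - 2"
    and q0_pp: "\<exists>r m. prime (r::nat) \<and> m > 0 \<and> q0 = r ^ m"
    and q0_ge: "q0 \<ge> N L"
    and q: "card (UNIV :: 'a set) = q0 ^ (\<Prod>l\<in>{1..L}. p l)"
    and F0: "is_subfield F0" "card F0 = q0"
    and n_def: "n = N L + L"
    and alpha_deg: "\<forall>l\<in>{1..L}. ext_deg F0 (field_gen F0 {\<alpha> l}) = p l"
    and alpha_F0: "\<forall>j\<in>{L+1..n}. \<alpha> j \<in> F0"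
    and alpha_dist: "inj_on \<alpha> {L+1..n}"
    and dvd: "L dvd b"
    and i: "i \<in> {1..L}"
  shows "\<exists>Dec. \<forall>A B R S f g.
     A \<in> carrier_mat a b \<and> B \<in> carrier_mat b c \<and>
     (\<forall>j\<in>{1..T}. R j \<in> carrier_mat a (b div L) \<and> S j \<in> carrier_mat (b div L) c) \<and>
     f \<in> carrier_mat a (b div L) \<and> g \<in> carrier_mat (b div L) c \<and>
     (\<forall>e\<in>elements_mat f. degree e \<le> L + T - 1) \<and> (\<forall>e\<in>elements_mat g. degree e \<le> L + T - 1) \<and>
     (\<forall>l\<in>{1..L}. eval_pm (\<alpha> l) f = col_block A L l \<and> eval_pm (\<alpha> l) g = row_block B L l) \<and>
     (\<forall>j\<in>{1..T}. eval_pm (\<alpha> (L + j)) f = R j \<and> eval_pm (\<alpha> (L + j)) g = S j)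
     \<longrightarrow> Dec (map (\<lambda>j. map_mat (tr UNIV (ftp_F F0 \<alpha> L i))
                 ((ftp_v \<alpha> n (L + j) * ftp_k \<alpha> L n (N i) i (\<alpha> (L + j)))
                    \<cdot>\<^sub>m eval_pm (\<alpha> (L + j)) (f * g)))
              [1..<N i + 1])
         = col_block A L i * row_block B L i"
proof -
  have p_inj: "inj_on p {1..L}"
    using incr by (intro strict_mono_on_imp_inj_on) (auto simp: strict_mono_on_def)
  have inj: "inj_on \<alpha> {1..n}"
    using primes prime_ge_2_nat by (intro ftp_points_inj[OF F0(1) p_inj _ alpha_deg alpha_F0 alpha_dist]) blast
  obtain r m where r: "prime r" "card F0 = r ^ m"
    using q0_pp F0(2) by blast
  have "p i \<le> p L"
    using incr i by (cases "i = L") (auto simp: less_imp_le)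
  then have Ni: "L + N i \<le> n" "p i + ((L + T - 1) + (L + T - 1)) \<le> N i"
    using N_def n_def i LT by auto
  then obtain Dec where Dec: "\<forall>h\<in>{h \<in> carrier_mat a c. \<forall>e\<in>elements_mat h. degree e \<le> (L + T - 1) + (L + T - 1)}.
      Dec (ftp_responses (ftp_F F0 \<alpha> L i) \<alpha> L n (N i) i h) = eval_pm (\<alpha> i) h"
    using ftp_decoder_exists[OF F0(1) r(2,1) q[folded F0(2)] p_inj primes alpha_deg inj alpha_F0 i Ni] by blast
  have key: "Dec (ftp_responses (ftp_F F0 \<alpha> L i) \<alpha> L n (N i) i (f * g)) = col_block A L i * row_block B L i"
    if "f \<in> carrier_mat a (b div L)" "g \<in> carrier_mat (b div L) c"
      "\<forall>e\<in>elements_mat f. degree e \<le> L + T - 1" "\<forall>e\<in>elements_mat g. degree e \<le> L + T - 1"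
      "\<forall>l\<in>{1..L}. eval_pm (\<alpha> l) f = col_block A L l \<and> eval_pm (\<alpha> l) g = row_block B L l" for f g A B
    using Dec mult_carrier_mat[OF that(1,2)] degree_mult_mat_le[OF that(1-4)] eval_pm_mult[OF that(1,2)]
      that(5) i by simp
  show ?thesis
    unfolding ftp_responses_def[symmetric]
    by (intro exI[of _ Dec] allI impI, elim conjE) (rule key)
qed

end
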